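(* Fix a positive integer $k$. Then there are only finitely many allowable critical data sets (for all types $(n,d,k)$ with $n>k$, $d\in\mathbb Z$) for which $C_{12}\le 0$ or $C_{21}\le 0$.
   Context: Let $0<k<n$ and $d$ be integers. Write $d=na-t$ with integers $a,t$, $0\le t<n$, and $ka=l(n-k)+t+m$ with integers $l,m$, $0\le m<n-k$. A critical data set for type $(n,d,k)$ is a tuple $A_c=(\alpha_c,n_1,d_1,k_1,n_2,d_2,k_2)$ with integers $n_i\ge1$, $k_i\ge0$, $d_i$, such that $n_1+n_2=n$, $d_1+d_2=d$, $k_1+k_2=k$, $\frac{d_2}{n_2}>\frac{d_1}{n_1}$, $\frac{k_1}{n_1}>\frac{k_2}{n_2}$, and $\alpha_c=\frac{d_2n_1-d_1n_2}{n_2k_1-n_1k_2}$. It is allowable if moreover $\frac tk<\alpha_c<\frac{ln+t}{k}$, $d\ge\frac1k(n^2-1)-(n-k)$, $d_1\ge\frac1{k_1}(n_1^2-1)-(n_1-k_1)$, and either ($k_2=0$ and $n_2=1$) or ($k_2\ge1$ and $d_2\ge\frac1{k_2}(n_2^2-1)-(n_2-k_2)$). For a critical data set define $C_{12}=-n_1n_2-d_2n_1+d_1n_2+k_1(d_2+n_2-k_2)$ and $C_{21}=-n_1n_2+d_2n_1-d_1n_2+k_2(d_1+n_1-k_1)$. *)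

theory Defs
  imports Main "HOL.Real"
begin

text \<open>Type (n,d,k): d = n*a - t with 0 \<le> t < n, and k*a = l*(n-k) + t + m with 0 \<le> m < n-k.
  These integers are uniquely determined; we write them out with div/mod.\<close>

definition ty_t :: "int \<Rightarrow> int \<Rightarrow> int" where
  "ty_t n d = (- d) mod n"

definition ty_a :: "int \<Rightarrow> int \<Rightarrow> int" where
  "ty_a n d = (d + ty_t n d) div n"

definition ty_l :: "int \<Rightarrow> int \<Rightarrow> int \<Rightarrow> int" where
  "ty_l n d k = (k * ty_a n d - ty_t n d) div (n - k)"

definition ty_m :: "int \<Rightarrow> int \<Rightarrow> int \<Rightarrow> int" where
  "ty_m n d k = (k * ty_a n d - ty_t n d) mod (n - k)"

definition critical_data_set ::
  "int \<Rightarrow> int \<Rightarrow> int \<Rightarrow> real \<Rightarrow> int \<Rightarrow> int \<Rightarrow> int \<Rightarrow> int \<Rightarrow> int \<Rightarrow> int \<Rightarrow> bool" where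
  "critical_data_set n d k \<alpha> n1 d1 k1 n2 d2 k2 \<longleftrightarrow>
     0 < k \<and> k < n \<and>
     n1 \<ge> 1 \<and> n2 \<ge> 1 \<and> k1 \<ge> 0 \<and> k2 \<ge> 0 \<and>
     n1 + n2 = n \<and> d1 + d2 = d \<and> k1 + k2 = k \<and>
     real_of_int d2 / real_of_int n2 > real_of_int d1 / real_of_int n1 \<and>
     real_of_int k1 / real_of_int n1 > real_of_int k2 / real_of_int n2 \<and>
     \<alpha> = real_of_int (d2 * n1 - d1 * n2) / real_of_int (n2 * k1 - n1 * k2)"

definition allowable ::
  "int \<Rightarrow> int \<Rightarrow> int \<Rightarrow> real \<Rightarrow> int \<Rightarrow> int \<Rightarrow> int \<Rightarrow> int \<Rightarrow> int \<Rightarrow> int \<Rightarrow> bool" where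
  "allowable n d k \<alpha> n1 d1 k1 n2 d2 k2 \<longleftrightarrow>
     critical_data_set n d k \<alpha> n1 d1 k1 n2 d2 k2 \<and>
     real_of_int (ty_t n d) / real_of_int k < \<alpha> \<and>
     \<alpha> < real_of_int (ty_l n d k * n + ty_t n d) / real_of_int k \<and>
     real_of_int d \<ge> real_of_int (n^2 - 1) / real_of_int k - real_of_int (n - k) \<and>
     real_of_int d1 \<ge> real_of_int (n1^2 - 1) / real_of_int k1 - real_of_int (n1 - k1) \<and>
     ((k2 = 0 \<and> n2 = 1) \<or>
      (k2 \<ge> 1 \<and> real_of_int d2 \<ge> real_of_int (n2^2 - 1) / real_of_int k2 - real_of_int (n2 - k2)))"

definition C12 :: "int \<Rightarrow> int \<Rightarrow> int \<Rightarrow> int \<Rightarrow> int \<Rightarrow> int \<Rightarrow> int" where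
  "C12 n1 d1 k1 n2 d2 k2 = - n1 * n2 - d2 * n1 + d1 * n2 + k1 * (d2 + n2 - k2)"

definition C21 :: "int \<Rightarrow> int \<Rightarrow> int \<Rightarrow> int \<Rightarrow> int \<Rightarrow> int \<Rightarrow> int" where
  "C21 n1 d1 k1 n2 d2 k2 = - n1 * n2 + d2 * n1 - d1 * n2 + k2 * (d1 + n1 - k1)"

end

theory Submission
  imports Defs
begin

text \<open>Write \<open>D = d\<^sub>2n\<^sub>1 - d\<^sub>1n\<^sub>2\<close> and \<open>K = n\<^sub>2k\<^sub>1 - n\<^sub>1k\<^sub>2\<close>, so that \<open>\<alpha> = D/K\<close>.
  Because \<open>d = na - t\<close>, the integer \<open>kD - tK\<close> is a multiple of \<open>n\<close>, so the window
  \<open>t/k < \<alpha> < (ln+t)/k\<close> sharpens to \<open>tK + n \<le> kD \<le> (ln+t)K - n\<close>. The case \<open>k\<^sub>2 = 0, n\<^sub>2 = 1\<close>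
  and the case \<open>n\<^sub>1 = k\<^sub>1\<close> force \<open>C\<^sub>1\<^sub>2 > 0\<close> (and, in the first case, \<open>C\<^sub>2\<^sub>1 > 0\<close>). Otherwise,
  \<open>C\<^sub>1\<^sub>2 \<le> 0\<close> or \<open>C\<^sub>2\<^sub>1 \<le> 0\<close>, combined with the sharpened window and the lower bounds on the
  degrees, bounds \<open>n\<close> by a polynomial in \<open>k\<close> and \<open>d\<close> by a polynomial in the ranks; since
  \<open>d\<^sub>i \<ge> -n\<^sub>i\<close>, the degrees are then bounded as well, and \<open>\<alpha>\<close> is determined by the rest.\<close>

lemma ty_t_nonneg: "0 < n \<Longrightarrow> 0 \<le> ty_t n d"
  by (simp add: ty_t_def)

lemma ty_a_eq: "n * ty_a n d = d + ty_t n d"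
proof -
  have "(d + ty_t n d) mod n = 0"
    unfolding ty_t_def by (simp add: mod_add_right_eq)
  then show ?thesis
    unfolding ty_a_def by (metis add.right_neutral mult_div_mod_eq)
qed

lemma ty_l_bounds:
  assumes "k < n"
  shows "ty_l n d k * (n - k) \<le> k * ty_a n d - ty_t n d"
    and "k * ty_a n d - ty_t n d < (ty_l n d k + 1) * (n - k)"
proof -
  let ?x = "k * ty_a n d - ty_t n d"
  have "?x = ty_l n d k * (n - k) + ty_m n d k"
    unfolding ty_l_def ty_m_def by (metis mult_div_mod_eq mult.commute)
  moreover have "0 \<le> ty_m n d k" "ty_m n d k < n - k"
    unfolding ty_m_def using assms by simp_all
  ultimately show "ty_l n d k * (n - k) \<le> ?x" "?x < (ty_l n d k + 1) * (n - k)"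
    by (simp_all add: algebra_simps)
qed

lemma of_int_divide_less_divide_iff:
  fixes a b c e :: int
  assumes "0 < b" "0 < e"
  shows "real_of_int a / real_of_int b < real_of_int c / real_of_int e \<longleftrightarrow> a * e < c * b"
proof -
  have "real_of_int a / real_of_int b < real_of_int c / real_of_int e
        \<longleftrightarrow> real_of_int a * real_of_int e < real_of_int c * real_of_int b"
    using assms by (simp add: divide_less_eq less_divide_eq)
  then show ?thesis by (simp flip: of_int_mult)
qed

lemma of_int_divide_diff_le_iff:
  fixes a b c x :: int
  assumes "0 < b"
  shows "real_of_int a / real_of_int b - real_of_int c \<le> real_of_int x \<longleftrightarrow> a \<le> b * (x + c)"
proof -
  have "real_of_int a / real_of_int b - real_of_int c \<le> real_of_int x
        \<longleftrightarrow> real_of_int a \<le> real_of_int b * (real_of_int x + real_of_int c)"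
    using assms by (simp add: divide_le_eq algebra_simps)
  then show ?thesis by (simp flip: of_int_mult of_int_add)
qed

lemma degree_lower_bound:
  fixes n d k :: int
  assumes "1 \<le> k" and "n^2 - 1 \<le> k * (d + (n - k))"
  shows "k - n - 1 \<le> d"
proof (rule ccontr)
  assume neg: "\<not> ?thesis"
  then have "k * (d + (n - k)) \<le> d + (n - k)"
    using assms(1) mult_right_mono_neg[of 1 k "d + (n - k)"] by simp
  moreover have "0 \<le> n^2" by simp
  ultimately show False using assms(2) neg by linarith
qed

locale critical_data =
  fixes n d k n1 d1 k1 n2 d2 k2 t a l :: int
  assumes n_eq: "n = n1 + n2" and d_eq: "d = d1 + d2" and k_eq: "k = k1 + k2"
    and k_pos: "0 < k" and k_less_n: "k < n"
    and n1_pos: "1 \<le> n1" and n2_pos: "1 \<le> n2" and k1_pos: "1 \<le> k1" and k2_nonneg: "0 \<le> k2"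
    and slope_d: "d1 * n2 < d2 * n1" and slope_k: "n1 * k2 < n2 * k1"
    and t_nonneg: "0 \<le> t" and a_eq: "n * a = d + t"
    and l_lower: "l * (n - k) \<le> k * a - t" and l_upper: "k * a - t < (l + 1) * (n - k)"
    and alpha_lower: "t * (n2 * k1 - n1 * k2) < (d2 * n1 - d1 * n2) * k"
    and alpha_upper: "(d2 * n1 - d1 * n2) * k < (l * n + t) * (n2 * k1 - n1 * k2)"
    and bound: "n^2 - 1 \<le> k * (d + (n - k))"
    and bound1: "n1^2 - 1 \<le> k1 * (d1 + (n1 - k1))"
begin

abbreviation "D \<equiv> d2 * n1 - d1 * n2"
abbreviation "K \<equiv> n2 * k1 - n1 * k2"

text \<open>\<open>q = K (k\<alpha> - t) / n\<close>, an integer because \<open>d = na - t\<close>.\<close>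
abbreviation "q \<equiv> k * d2 + t * k2 - k * n2 * a"

lemma d1_eq: "d1 = n * a - t - d2"
  using a_eq d_eq by simp

lemma D_pos: "0 < D" and K_pos: "0 < K"
  using slope_d slope_k by simp_all

lemma k_D_eq: "k * D = t * K + n * q"
  by (simp add: d1_eq n_eq k_eq algebra_simps)

lemma q_pos: "0 < q"
proof -
  have "0 < n * q" using k_D_eq alpha_lower by (simp add: mult.commute)
  then show ?thesis using k_less_n k_pos by (simp add: zero_less_mult_iff)
qed

lemma q_less: "q < l * K"
proof -
  have "0 < n * (l * K - q)"
    using k_D_eq alpha_upper by (simp add: algebra_simps)
  then show ?thesis using k_less_n k_pos by (simp add: zero_less_mult_iff)
qed

lemma n_le_k_D: "n \<le> k * D"
proof -
  have "n \<le> n * q" using q_pos k_less_n k_pos by simp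
  moreover have "0 \<le> t * K" using t_nonneg K_pos by simp
  ultimately show ?thesis using k_D_eq by linarith
qed

lemma k_D_plus_n_le: "k * D + n \<le> (l * n + t) * K"
proof -
  have "n * (q + 1) \<le> n * (l * K)" using q_less k_less_n k_pos by simp
  then show ?thesis using k_D_eq by (simp add: algebra_simps)
qed

lemma l_n_t_pos: "0 < l * n + t"
proof -
  have "0 < (l * n + t) * K" using k_D_plus_n_le n_le_k_D k_pos k_less_n by linarith
  then show ?thesis using K_pos by (simp add: zero_less_mult_iff)
qed

lemma k_d_eq: "k * d = n * (k * a - t) + t * (n - k)"
proof -
  have "k * d = k * (n * a - t)" using a_eq by simp
  then show ?thesis by (simp add: algebra_simps)
qed

lemma l_n_t_mult_le: "(l * n + t) * (n - k) \<le> k * d"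
proof -
  have "n * (l * (n - k)) \<le> n * (k * a - t)" using l_lower k_less_n k_pos by simp
  then show ?thesis using k_d_eq by (simp add: algebra_simps)
qed

lemma k_d_less: "k * d < (n - k) * (l * n + t + n)"
proof -
  have "n * (k * a - t) < n * ((l + 1) * (n - k))" using l_upper k_less_n k_pos by simp
  then show ?thesis using k_d_eq by (simp add: algebra_simps)
qed

lemma D_mult_less: "D * (n - k) < d * K"
proof -
  have "k * D * (n - k) < (l * n + t) * K * (n - k)"
    using alpha_upper k_less_n by (simp add: mult.commute)
  also have "\<dots> = ((l * n + t) * (n - k)) * K" by (simp add: algebra_simps)
  also have "\<dots> \<le> k * d * K"
    using l_n_t_mult_le K_pos by (intro mult_right_mono) auto
  finally have "k * (D * (n - k)) < k * (d * K)" by (simp only: mult.assoc mult.left_commute)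
  then show ?thesis using k_pos by simp
qed

lemma d1_lower: "- n1 \<le> d1"
  using degree_lower_bound[OF k1_pos bound1] k1_pos by linarith

lemma k_k1_k2_le: "k * (k1 * k2) \<le> k^3"
proof -
  have "k1 * k2 \<le> k * k" using k_eq k1_pos k2_nonneg by (intro mult_mono) auto
  then show ?thesis using k_pos by (simp add: power3_eq_cube)
qed

lemma C_pos_if_k2_eq_0:
  assumes k2: "k2 = 0" and n2: "n2 = 1"
  shows "0 < C12 n1 d1 k1 n2 d2 k2" and "0 < C21 n1 d1 k1 n2 d2 k2"
proof -
  define x where "x = d2 - a"
  have q_eq: "q = k * x" and K_eq: "K = k" using k2 n2 k_eq unfolding x_def by (simp_all add: algebra_simps)
  have x_pos: "0 < x" using q_pos k_pos q_eq by (simp add: zero_less_mult_iff)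
  have x_less: "x < l" using q_less k_pos q_eq K_eq by (simp add: mult.commute)
  have D_eq: "D = n * x + t" unfolding x_def using k2 n2 by (simp add: d1_eq n_eq algebra_simps)
  have "C21 n1 d1 k1 n2 d2 k2 = n * x + t - n1"
    unfolding C21_def using k2 n2 D_eq by (simp add: algebra_simps)
  moreover have "n \<le> n * x" using x_pos k_less_n k_pos by simp
  ultimately show "0 < C21 n1 d1 k1 n2 d2 k2" using t_nonneg n_eq n2 by simp
  have "C12 n1 d1 k1 n2 d2 k2 = (n - k) * (l - x) + (k - n1) + (k * a - t - l * (n - k))"
    unfolding C12_def x_def using k2 n2 by (simp add: d1_eq n_eq k_eq algebra_simps)
  moreover have "n - k \<le> (n - k) * (l - x)" using x_less k_less_n by simp
  ultimately show "0 < C12 n1 d1 k1 n2 d2 k2" using l_lower n_eq n2 by simp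
qed

lemma C12_pos_if_n1_eq_k1:
  assumes eq: "n1 = k1"
  shows "0 < C12 n1 d1 k1 n2 d2 k2"
proof -
  have "d * K - D * (n - k) = n * (d1 * (n2 - k2))"
    using eq by (simp add: n_eq d_eq k_eq algebra_simps)
  then have "0 < n * (d1 * (n2 - k2))" using D_mult_less by simp
  then have "0 < d1 * (n2 - k2)" using k_less_n k_pos by (simp add: zero_less_mult_iff)
  moreover have "0 < k1 * (n2 - k2)" using K_pos eq by (simp add: algebra_simps)
  ultimately have n2_k2: "0 < n2 - k2" and d1_pos: "0 < d1" using k1_pos by (auto simp: zero_less_mult_iff)
  have "k1 \<le> d1"
  proof (rule ccontr)
    assume "\<not> k1 \<le> d1"
    then have "k1 * d1 \<le> k1 * (k1 - 1)" using k1_pos by (intro mult_left_mono) auto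
    then show False using bound1 eq d1_pos \<open>\<not> k1 \<le> d1\<close> by (simp add: power2_eq_square algebra_simps)
  qed
  then have "k1 * n2 \<le> d1 * n2" using n2_pos by (intro mult_right_mono) auto
  moreover have "C12 n1 d1 k1 n2 d2 k2 = d1 * n2 - k1 * k2"
    unfolding C12_def using eq by (simp add: algebra_simps)
  ultimately show ?thesis using \<open>0 < k1 * (n2 - k2)\<close> by (simp add: algebra_simps)
qed

text \<open>In the identity below, the three summands on the right are nonnegative: \<open>-C\<^sub>1\<^sub>2\<close>, the gap
  \<open>lK - q - 1\<close> left by the upper end of the window, and the remainder of \<open>ka - t\<close> mod \<open>n - k\<close>.\<close>

lemma C12_nonpos_imp_l_n_t_le:
  assumes "C12 n1 d1 k1 n2 d2 k2 \<le> 0"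
  shows "k2 * (n1 - k1) * (l * n + t) + (n - k1) \<le> k * (n2 * (n1 - k1) + k1 * k2)"
proof -
  have "k * (n2 * (n1 - k1) + k1 * k2) - (k2 * (n1 - k1) * (l * n + t) + (n - k1))
        = k * - C12 n1 d1 k1 n2 d2 k2 + (n - k1) * (l * K - q - 1) + n2 * k1 * (k * a - t - l * (n - k))"
    unfolding C12_def by (simp add: d1_eq n_eq k_eq algebra_simps)
  moreover have "0 \<le> k * - C12 n1 d1 k1 n2 d2 k2" using assms k_pos by (simp add: mult_nonneg_nonpos)
  moreover have "0 \<le> (n - k1) * (l * K - q - 1)"
    using q_less k_less_n k_eq k2_nonneg by (intro mult_nonneg_nonneg) auto
  moreover have "0 \<le> n2 * k1 * (k * a - t - l * (n - k))" using l_lower n2_pos k1_pos by simp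
  ultimately show ?thesis by linarith
qed

lemma C12_nonpos_bounds_if_n1_less_k1:
  assumes C12: "C12 n1 d1 k1 n2 d2 k2 \<le> 0" and lt: "n1 < k1"
  shows "d < k1 * k2" and "n \<le> k + k^3"
proof -
  have "0 \<le> d1" using degree_lower_bound[OF k1_pos bound1] lt by linarith
  then have "0 \<le> d1 * (n - k1)" using k_less_n k_eq k2_nonneg by simp
  moreover have "C12 n1 d1 k1 n2 d2 k2 = (k1 - n1) * (d + n2) + d1 * (n - k1) - k1 * k2"
    unfolding C12_def by (simp add: n_eq d_eq algebra_simps)
  ultimately have "(k1 - n1) * (d + n2) \<le> k1 * k2" using C12 by linarith
  moreover have "d + n2 \<le> (k1 - n1) * (d + n2) \<or> d + n2 < 0"
    using lt by (auto simp: mult_le_cancel_right1)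
  ultimately show d_less: "d < k1 * k2" using n2_pos k1_pos k2_nonneg by (smt (verit) mult_nonneg_nonneg)
  have "n^2 - 1 < k * (k1 * k2 + (n - k))" using bound d_less k_pos by (smt (verit) mult_strict_left_mono)
  then have "n * (n - k) < k * (k1 * k2) + 1 - k^2" by (simp add: power2_eq_square algebra_simps)
  moreover have "n - k \<le> n * (n - k)" using k_less_n k_pos by simp
  moreover have "1 \<le> k^2" using mult_mono[of 1 k 1 k] k_pos by (simp add: power2_eq_square)
  ultimately show "n \<le> k + k^3" using k_k1_k2_le by linarith
qed

end

locale critical_data_k2_pos = critical_data +
  assumes k2_pos: "1 \<le> k2"
    and bound2: "n2^2 - 1 \<le> k2 * (d2 + (n2 - k2))"
begin

lemma C12_nonpos_imp_n2_K_le: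
  assumes "C12 n1 d1 k1 n2 d2 k2 \<le> 0"
  shows "n2 * K - k1 \<le> k2 * D"
proof -
  have "k2 * C12 n1 d1 k1 n2 d2 k2 = n2 * K - k1 - k2 * D + k1 * (k2 * (d2 + (n2 - k2)) - (n2^2 - 1))"
    unfolding C12_def by (simp add: algebra_simps power2_eq_square)
  moreover have "k2 * C12 n1 d1 k1 n2 d2 k2 \<le> 0" using assms k2_pos by (simp add: mult_nonneg_nonpos)
  moreover have "0 \<le> k1 * (k2 * (d2 + (n2 - k2)) - (n2^2 - 1))" using bound2 k1_pos by simp
  ultimately show ?thesis by linarith
qed

lemma C12_nonpos_bounds_if_k1_less_n1:
  assumes C12: "C12 n1 d1 k1 n2 d2 k2 \<le> 0" and gt: "k1 < n1"
  shows "n \<le> k + k^3" and "d < (n - k) * (n2 * (n1 - k1) + k1 * k2 + n)"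
proof -
  define c where "c = n1 - k1"
  define L where "L = l * n + t"
  have c_pos: "1 \<le> c" using gt c_def by simp
  have L_le: "k2 * c * L + (n - k1) \<le> k * (n2 * c + k1 * k2)"
    using C12_nonpos_imp_l_n_t_le[OF C12] unfolding c_def L_def .
  have "k * (n2 * K - k1) \<le> k2 * (k * D)"
    using mult_left_mono[OF C12_nonpos_imp_n2_K_le[OF C12], of k] k_pos by (simp add: mult.left_commute)
  also have "\<dots> \<le> k2 * (L * K - n)"
    using k_D_plus_n_le k2_nonneg unfolding L_def by (intro mult_left_mono) auto
  finally have "k * (n2 * K - k1) * c \<le> k2 * (L * K - n) * c" using c_pos by (intro mult_right_mono) auto
  also have "\<dots> = K * (k2 * c * L) - k2 * n * c" by (simp add: algebra_simps)
  also have "\<dots> \<le> K * (k * (n2 * c + k1 * k2) - (n - k1)) - k2 * n * c"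
    using L_le K_pos by (simp add: mult_left_mono)
  finally have key: "K * (n - k1 - k * k1 * k2) + k2 * n * c \<le> k * k1 * c"
    by (simp add: algebra_simps)
  show "n \<le> k + k^3"
  proof (rule ccontr)
    assume "\<not> n \<le> k + k^3"
    then have "k1 + k * k1 * k2 < n" using k_k1_k2_le k_eq k2_nonneg by (simp add: mult.assoc)
    then have "k2 * n * c < k * k1 * c" using key K_pos by (smt (verit) mult_pos_pos)
    then have "k2 * n < k * k1" using c_pos by simp
    moreover have "n \<le> k2 * n" using k2_pos k_less_n k_pos by simp
    moreover have "k * k1 \<le> k * k1 * k2" using k2_pos k_pos k1_pos by simp
    ultimately show False using \<open>k1 + k * k1 * k2 < n\<close> k1_pos by linarith
  qed
  have "1 \<le> k2 * c" using mult_mono[of 1 k2 1 c] k2_pos c_pos by simp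
  then have "L \<le> k2 * c * L" using l_n_t_pos unfolding L_def by simp
  moreover have "k1 < k * n" using k_eq k2_nonneg k_less_n k_pos by (smt (verit) mult_le_cancel_right1)
  ultimately have "L + n < k * (n2 * c + k1 * k2) + k * n" using L_le by linarith
  then have "L + n < k * (n2 * c + k1 * k2 + n)" by (simp add: algebra_simps)
  then have "k * d < (n - k) * (k * (n2 * c + k1 * k2 + n))"
    using k_d_less k_less_n unfolding L_def by (smt (verit) mult_strict_left_mono)
  then show "d < (n - k) * (n2 * (n1 - k1) + k1 * k2 + n)"
    using k_pos unfolding c_def by (simp add: mult.left_commute)
qed

lemma C21_nonpos_bounds:
  assumes C21: "C21 n1 d1 k1 n2 d2 k2 \<le> 0"
  shows "n \<le> (k + 1) * (k + k^3)" and "d \<le> n * (n1 * n2 + k1 * k2)"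
proof -
  have "n2 * C21 n1 d1 k1 n2 d2 k2 = (n2 - k2) * D - k1 * k2 * n2
          + n1 * (k2 * (d2 + (n2 - k2)) - (n2^2 - 1)) + n1 * (k2 * k2 - 1)"
    unfolding C21_def by (simp add: algebra_simps power2_eq_square)
  moreover have "n2 * C21 n1 d1 k1 n2 d2 k2 \<le> 0" using C21 n2_pos by (simp add: mult_nonneg_nonpos)
  moreover have "0 \<le> n1 * (k2 * (d2 + (n2 - k2)) - (n2^2 - 1))" using bound2 n1_pos by simp
  moreover have "0 \<le> n1 * (k2 * k2 - 1)" using mult_mono[of 1 k2 1 k2] k2_pos n1_pos by simp
  ultimately have D_le: "(n2 - k2) * D \<le> k1 * k2 * n2" by linarith
  have "n2 - k2 \<le> k * k1 * k2"
  proof (cases "n2 \<le> k2")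
    case True
    moreover have "0 \<le> k * k1 * k2" using k_pos k1_pos k2_nonneg by simp
    ultimately show ?thesis by linarith
  next
    case False
    have "(n2 - k2) * n \<le> (n2 - k2) * (k * D)" using n_le_k_D False by simp
    also have "\<dots> \<le> k * (k1 * k2 * n2)" using D_le k_pos by (simp add: mult.left_commute)
    also have "\<dots> \<le> k * (k1 * k2 * n)"
      using n_eq n1_pos k_pos k1_pos k2_nonneg by (intro mult_left_mono) auto
    finally have "(n2 - k2) * n \<le> (k * k1 * k2) * n" by (simp add: algebra_simps)
    then show ?thesis using k_less_n k_pos by simp
  qed
  then have n2_le: "n2 \<le> k + k^3" using k_k1_k2_le k_eq k1_pos by (simp add: mult.assoc)
  have "n1 \<le> n1 * k2" using k2_pos n1_pos by simp
  then have "n \<le> (k1 + 1) * n2" using slope_k n_eq by (simp add: algebra_simps)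
  also have "\<dots> \<le> (k + 1) * (k + k^3)" using n2_le k_eq k1_pos k2_nonneg n2_pos by (intro mult_mono) auto
  finally show "n \<le> (k + 1) * (k + k^3)" .
  have "k2 * d1 \<le> n1 * n2 - D - k2 * (n1 - k1)" using C21 unfolding C21_def by (simp add: algebra_simps)
  then have C21': "n * (k2 * d1) \<le> n * (n1 * n2 - D - k2 * (n1 - k1))" using k_less_n k_pos by simp
  have "k2 * n1 * d = n * (k2 * d1) + k2 * D" by (simp add: n_eq d_eq algebra_simps)
  also have "\<dots> \<le> n * (n1 * n2 - D - k2 * (n1 - k1)) + k2 * D" using C21' by simp
  also have "\<dots> = n * (n1 * n2 + k1 * k2) - ((n - k2) * D + n * k2 * n1)" by (simp add: algebra_simps)
  also have "\<dots> \<le> n * (n1 * n2 + k1 * k2)"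
  proof -
    have "0 \<le> (n - k2) * D" using D_pos k_less_n k_eq k1_pos by (intro mult_nonneg_nonneg) auto
    moreover have "0 \<le> n * k2 * n1" using k_less_n k_pos k2_nonneg n1_pos by simp
    ultimately show ?thesis by linarith
  qed
  finally have "k2 * n1 * d \<le> n * (n1 * n2 + k1 * k2)" .
  moreover have "1 \<le> k2 * n1" using mult_mono[of 1 k2 1 n1] k2_pos n1_pos by simp
  moreover have "0 \<le> n * (n1 * n2 + k1 * k2)" using k_less_n k_pos n1_pos n2_pos k1_pos k2_nonneg by simp
  ultimately show "d \<le> n * (n1 * n2 + k1 * k2)" by (smt (verit) mult_le_cancel_right1)
qed

lemma bounds_if_C_nonpos:
  assumes "C12 n1 d1 k1 n2 d2 k2 \<le> 0 \<or> C21 n1 d1 k1 n2 d2 k2 \<le> 0"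
  shows "n \<le> (k + 1) * (k + k^3) \<and> d \<le> n * (n1 * n2 + k1 * k2 + n)"
proof -
  have "0 \<le> k^3" using k_pos by simp
  then have k_bound: "k + k^3 \<le> (k + 1) * (k + k^3)"
    using k_pos mult_right_mono[of 1 "k + 1" "k + k^3"] by simp
  have mono: "x \<le> n * (n1 * n2 + k1 * k2 + n)" if "x \<le> n1 * n2 + k1 * k2 + n" for x
    using that mult_le_cancel_right1 k_less_n k_pos n1_pos n2_pos k1_pos k2_nonneg by (smt (verit) mult_nonneg_nonneg)
  consider "C21 n1 d1 k1 n2 d2 k2 \<le> 0"
    | "C12 n1 d1 k1 n2 d2 k2 \<le> 0" "n1 < k1" | "C12 n1 d1 k1 n2 d2 k2 \<le> 0" "k1 < n1"
    using assms C12_pos_if_n1_eq_k1 by fastforce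
  then show ?thesis
  proof cases
    case 1
    have "n * (n1 * n2 + k1 * k2) \<le> n * (n1 * n2 + k1 * k2 + n)" using k_less_n k_pos by simp
    then show ?thesis using C21_nonpos_bounds[OF 1] by simp
  next
    case 2
    have "0 \<le> n1 * n2" using n1_pos n2_pos by simp
    then have "k1 * k2 \<le> n * (n1 * n2 + k1 * k2 + n)" using k_less_n k_pos by (intro mono) simp
    then show ?thesis using C12_nonpos_bounds_if_n1_less_k1[OF 2] k_bound by simp
  next
    case 3
    have "0 \<le> n2 * k1" using n2_pos k1_pos by simp
    then have "n2 * (n1 - k1) + k1 * k2 + n \<le> n1 * n2 + k1 * k2 + n" by (simp add: algebra_simps)
    moreover have "0 \<le> n2 * (n1 - k1) + k1 * k2 + n" using 3(2) n2_pos k1_pos k2_nonneg k_less_n k_pos by simp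
    ultimately have "(n - k) * (n2 * (n1 - k1) + k1 * k2 + n) \<le> n * (n1 * n2 + k1 * k2 + n)"
      using k_pos k_less_n by (intro mult_mono) auto
    then show ?thesis using C12_nonpos_bounds_if_k1_less_n1[OF 3] k_bound by simp
  qed
qed

end

lemma allowable_imp_critical_data:
  assumes "allowable n d k \<alpha> n1 d1 k1 n2 d2 k2"
  shows "critical_data n d k n1 d1 k1 n2 d2 k2 (ty_t n d) (ty_a n d) (ty_l n d k)"
proof -
  let ?D = "d2 * n1 - d1 * n2" and ?K = "n2 * k1 - n1 * k2"
  have crit: "0 < k" "k < n" "1 \<le> n1" "1 \<le> n2" "0 \<le> k2" "n = n1 + n2" "d = d1 + d2" "k = k1 + k2"
    and slope_d: "real_of_int d1 / real_of_int n1 < real_of_int d2 / real_of_int n2"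
    and slope_k: "real_of_int k2 / real_of_int n2 < real_of_int k1 / real_of_int n1"
    and alpha: "\<alpha> = real_of_int ?D / real_of_int ?K"
    and alpha_lower: "real_of_int (ty_t n d) / real_of_int k < \<alpha>"
    and alpha_upper: "\<alpha> < real_of_int (ty_l n d k * n + ty_t n d) / real_of_int k"
    and bound: "real_of_int (n^2 - 1) / real_of_int k - real_of_int (n - k) \<le> real_of_int d"
    and bound1: "real_of_int (n1^2 - 1) / real_of_int k1 - real_of_int (n1 - k1) \<le> real_of_int d1"
    using assms unfolding allowable_def critical_data_set_def by blast+
  have n_pos: "0 < n1" "0 < n2" using crit by simp_all
  have "d1 * n2 < d2 * n1"
    using slope_d unfolding of_int_divide_less_divide_iff[OF n_pos] .
  moreover have "k2 * n1 < k1 * n2"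
    using slope_k unfolding of_int_divide_less_divide_iff[OF n_pos(2,1)] .
  moreover from this have k1: "0 < k1" using crit by (smt (verit) mult_nonneg_nonneg zero_less_mult_iff)
  moreover from calculation have K: "0 < ?K" by (simp add: mult.commute)
  moreover have "ty_t n d * ?K < ?D * k"
    using alpha_lower unfolding alpha of_int_divide_less_divide_iff[OF crit(1) K] .
  moreover have "?D * k < (ty_l n d k * n + ty_t n d) * ?K"
    using alpha_upper unfolding alpha of_int_divide_less_divide_iff[OF K crit(1)] .
  moreover have "n^2 - 1 \<le> k * (d + (n - k))"
    using bound unfolding of_int_divide_diff_le_iff[OF crit(1)] .
  moreover have "n1^2 - 1 \<le> k1 * (d1 + (n1 - k1))"
    using bound1 unfolding of_int_divide_diff_le_iff[OF k1] .
  ultimately show ?thesis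
    using crit ty_t_nonneg ty_a_eq ty_l_bounds by unfold_locales (auto simp: mult.commute)
qed

lemma allowable_bounds:
  assumes A: "allowable n d k \<alpha> n1 d1 k1 n2 d2 k2"
    and C: "C12 n1 d1 k1 n2 d2 k2 \<le> 0 \<or> C21 n1 d1 k1 n2 d2 k2 \<le> 0"
  shows "n \<le> (k + 1) * (k + k^3) \<and> - n1 \<le> d1 \<and> - n2 \<le> d2 \<and> d \<le> n * (n1 * n2 + k1 * k2 + n)"
proof -
  interpret critical_data n d k n1 d1 k1 n2 d2 k2 "ty_t n d" "ty_a n d" "ty_l n d k"
    using allowable_imp_critical_data[OF A] .
  have "k2 = 0 \<and> n2 = 1 \<or> 1 \<le> k2 \<and>
      real_of_int (n2^2 - 1) / real_of_int k2 - real_of_int (n2 - k2) \<le> real_of_int d2"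
    using A unfolding allowable_def by blast
  then have k2: "0 < k2" and bound2: "n2^2 - 1 \<le> k2 * (d2 + (n2 - k2))"
    using C C_pos_if_k2_eq_0 of_int_divide_diff_le_iff[of k2] by force+
  interpret critical_data_k2_pos n d k n1 d1 k1 n2 d2 k2 "ty_t n d" "ty_a n d" "ty_l n d k"
    using k2 bound2 by unfold_locales simp_all
  show ?thesis
    using bounds_if_C_nonpos[OF C] d1_lower degree_lower_bound[OF k2_pos bound2] k2 by auto
qed

theorem theorem5p8:
  fixes k :: int
  assumes "k > 0"
  shows "finite {(n, d, \<alpha>, n1, d1, k1, n2, d2, k2).
            allowable n d k \<alpha> n1 d1 k1 n2 d2 k2 \<and>
            (C12 n1 d1 k1 n2 d2 k2 \<le> 0 \<or> C21 n1 d1 k1 n2 d2 k2 \<le> 0)}"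
    (is "finite ?S")
proof -
  define N where "N = (k + 1) * (k + k^3)"
  define ranks where "ranks = {1..N} \<times> {0..k} \<times> {1..N} \<times> {0..k}"
  define degrees :: "int \<times> int \<times> int \<times> int \<Rightarrow> (int \<times> int) set"
    where "degrees = (\<lambda>(n1, k1, n2, k2).
    let U = (n1 + n2) * (n1 * n2 + k1 * k2 + n1 + n2) in {- n1..U + n2} \<times> {- n2..U + n1})"
  define data where "data = (\<lambda>((n1, k1, n2, k2), (d1, d2)).
    (n1 + n2, d1 + d2, real_of_int (d2 * n1 - d1 * n2) / real_of_int (n2 * k1 - n1 * k2),
     n1, d1, k1, n2, d2, k2))"
  have "?S \<subseteq> data ` (SIGMA r:ranks. degrees r)"
  proof clarify
    fix n d \<alpha> n1 d1 k1 n2 d2 k2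
    assume A: "allowable n d k \<alpha> n1 d1 k1 n2 d2 k2"
      and C: "C12 n1 d1 k1 n2 d2 k2 \<le> 0 \<or> C21 n1 d1 k1 n2 d2 k2 \<le> 0"
    have "n = n1 + n2" "d = d1 + d2" "k = k1 + k2" "1 \<le> n1" "1 \<le> n2" "0 \<le> k1" "0 \<le> k2"
      "\<alpha> = real_of_int (d2 * n1 - d1 * n2) / real_of_int (n2 * k1 - n1 * k2)"
      using A unfolding allowable_def critical_data_set_def by auto
    with allowable_bounds[OF A C] show "(n, d, \<alpha>, n1, d1, k1, n2, d2, k2) \<in> data ` (SIGMA r:ranks. degrees r)"
      unfolding data_def ranks_def degrees_def N_def Let_def
      by (intro image_eqI[where x = "((n1, k1, n2, k2), (d1, d2))"]) (auto simp: algebra_simps)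
  qed
  moreover have "finite (SIGMA r:ranks. degrees r)"
    unfolding ranks_def degrees_def by (auto simp: Let_def)
  ultimately show ?thesis by (meson finite_imageI finite_subset)
qed

end
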